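(* Let $\omega_+$ be the quasi-free state described in the context, let $n\in\mathbb N$, and let $\Omega_n\in\mathbb C^{2n\times2n}$ be the Majorana correlation matrix $(\Omega_n)_{kl}=\omega_+(B(w^{(k)})B(w^{(l)}))$, $k,l=1,\dots,2n$. Then $$\Omega_n=1_{2n}+i\,T_n[a],\qquad a(\xi)=\frac2i\begin{bmatrix}s_0(\xi)-\frac12 & s_2(\xi)-is_3(\xi)\\ s_2(\xi)+is_3(\xi) & s_0(\xi)-\frac12\end{bmatrix},$$ where $T_n[a]$ is the $2\times2$ block Toeplitz matrix with symbol $a\in L^\infty_{2\times2}$; moreover $T_n[a]$ is real and skew-symmetric, $T_n[a]\in\mathbb R^{2n\times2n}$, $T_n[a]^t=-T_n[a]$.
   Context: $\mathfrak h=\ell^2(\mathbb Z)$; $b_x,b_x^*$ ($x\in\mathbb Z$) generate a CAR algebra: $\{b_x,b_y\}=0$, $\{b_x^*,b_y\}=\delta_{xy}$. For $f=(f_+,f_-)\in\mathfrak h\oplus\mathfrak h$, $B(f)=\sum_x(f_+(x)b_x^*+f_-(x)b_x)$. Vectors $w^{(k)}=(w^{(k)}_+,w^{(k)}_-)$, supported on $\{1,\dots,n\}$, are given for $j=1,\dots,n$ by $w_+^{(k)}(j)=\delta_{k,2j-1}-i\delta_{k,2j}$, $w_-^{(k)}(j)=\delta_{k,2j-1}+i\delta_{k,2j}$ (so $B(w^{(2j-1)})=b_j^*+b_j$, $B(w^{(2j)})=i(b_j-b_j^* )$). Parameters: $\beta_L,\beta_R>0$, $\beta=\frac12(\beta_R+\beta_L)$,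 $\delta=\frac12(\beta_R-\beta_L)$, $\gamma\in(-1,1)$, $\lambda\in\mathbb R$; $\kappa(\xi)=2\lambda\sin\xi-(1-\gamma^2)\sin2\xi$, $\mu(\xi)=((\cos\xi-\lambda)^2+\gamma^2\sin^2\xi)^{1/2}$, $\varphi_{\alpha,\alpha'}=\sinh(\alpha\mu)/(\cosh(\alpha\mu)+\cosh(\alpha'\mu))$. Define $s_0=\frac12-\frac12\varphi_{\delta,\beta}\operatorname{sign}\kappa$, $s_1=0$, $s_2=\frac12\varphi_{\beta,\delta}\gamma\sin\xi/\mu$, $s_3=-\frac12\varphi_{\beta,\delta}(\cos\xi-\lambda)/\mu$, and $s(\xi)=\sum_{k=0}^3s_k(\xi)\sigma_k$ ($\sigma_0=1_2$, $\sigma_{1,2,3}$ Pauli matrices). $\omega_+$ is the quasi-free state (odd moments of $B$'s vanish, even moments given by the signed sum over pairings of two-point functions) with $\omega_+(B^*(f)B(g))=(f,Sg)$, where $S$ is the operator on $\ell^2(\mathbb Z)\otimes\mathbb C^2$ which, under $Ff(\xi)=\sum_xf(x)e^{ix\xi}$, is multiplication by $s(\xi)$. Block Toeplitz convention: for $a\in L^\infty_{N\times N}$ (essentially bounded $N\times N$ matrix functions on the unit circle), $a_x=\int_0^{2\pi}\frac{d\xi}{2\pi}a(\xi)e^{-ix\xi}\in\mathbb C^{N\times N}$, and $T_n[a]$ is the $Nn\times Nn$ matrix whose $(i,j)$-th $N\times N$ block is $a_{i-j}$, $i,j=1,\dots,n$. *)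

theory Defs
  imports "HOL-Analysis.Analysis"
begin

definition kappa :: "real \<Rightarrow> real \<Rightarrow> real \<Rightarrow> real" where
  "kappa gam lam \<xi> = 2 * lam * sin \<xi> - (1 - gam^2) * sin (2 * \<xi>)"

definition mu :: "real \<Rightarrow> real \<Rightarrow> real \<Rightarrow> real" where
  "mu gam lam \<xi> = sqrt ((cos \<xi> - lam)^2 + gam^2 * (sin \<xi>)^2)"

definition phi :: "real \<Rightarrow> real \<Rightarrow> real \<Rightarrow> real" where
  "phi al al' m = sinh (al * m) / (cosh (al * m) + cosh (al' * m))"

definition beta_avg :: "real \<Rightarrow> real \<Rightarrow> real" where
  "beta_avg bL bR = (bR + bL) / 2"

definition delta_diff :: "real \<Rightarrow> real \<Rightarrow> real" where
  "delta_diff bL bR = (bR - bL) / 2"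

definition s0 :: "real \<Rightarrow> real \<Rightarrow> real \<Rightarrow> real \<Rightarrow> real \<Rightarrow> real" where
  "s0 bL bR gam lam \<xi> =
     1/2 - 1/2 * phi (delta_diff bL bR) (beta_avg bL bR) (mu gam lam \<xi>) * sgn (kappa gam lam \<xi>)"

definition s1 :: "real \<Rightarrow> real \<Rightarrow> real \<Rightarrow> real \<Rightarrow> real \<Rightarrow> real" where
  "s1 bL bR gam lam \<xi> = 0"

definition s2 :: "real \<Rightarrow> real \<Rightarrow> real \<Rightarrow> real \<Rightarrow> real \<Rightarrow> real" where
  "s2 bL bR gam lam \<xi> =
     1/2 * phi (beta_avg bL bR) (delta_diff bL bR) (mu gam lam \<xi>) * gam * sin \<xi> / mu gam lam \<xi>"

definition s3 :: "real \<Rightarrow> real \<Rightarrow> real \<Rightarrow> real \<Rightarrow> real \<Rightarrow> real" where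
  "s3 bL bR gam lam \<xi> =
     - 1/2 * phi (beta_avg bL bR) (delta_diff bL bR) (mu gam lam \<xi>) * (cos \<xi> - lam) / mu gam lam \<xi>"

text \<open>2x2 matrices are functions nat => nat => complex with indices 0,1.
  s = s0 sigma0 + s1 sigma1 + s2 sigma2 + s3 sigma3; index 0 is the "+" component,
  index 1 the "-" component.\<close>

definition s_mat :: "real \<Rightarrow> real \<Rightarrow> real \<Rightarrow> real \<Rightarrow> real \<Rightarrow> nat \<Rightarrow> nat \<Rightarrow> complex" where
  "s_mat bL bR gam lam \<xi> r c =
     (let a0 = complex_of_real (s0 bL bR gam lam \<xi>); a1 = complex_of_real (s1 bL bR gam lam \<xi>);
          a2 = complex_of_real (s2 bL bR gam lam \<xi>); a3 = complex_of_real (s3 bL bR gam lam \<xi>)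
      in if r = 0 \<and> c = 0 then a0 + a3
         else if r = 0 \<and> c = 1 then a1 - \<i> * a2
         else if r = 1 \<and> c = 0 then a1 + \<i> * a2
         else if r = 1 \<and> c = 1 then a0 - a3 else 0)"

definition a_sym :: "real \<Rightarrow> real \<Rightarrow> real \<Rightarrow> real \<Rightarrow> real \<Rightarrow> nat \<Rightarrow> nat \<Rightarrow> complex" where
  "a_sym bL bR gam lam \<xi> r c =
     (let a0 = complex_of_real (s0 bL bR gam lam \<xi>);
          a2 = complex_of_real (s2 bL bR gam lam \<xi>); a3 = complex_of_real (s3 bL bR gam lam \<xi>)
      in (2 / \<i>) *
         (if r = 0 \<and> c = 0 then a0 - 1/2
          else if r = 0 \<and> c = 1 then a2 - \<i> * a3
          else if r = 1 \<and> c = 0 then a2 + \<i> * a3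
          else if r = 1 \<and> c = 1 then a0 - 1/2 else 0))"

definition fourier_coeff :: "(real \<Rightarrow> complex) \<Rightarrow> int \<Rightarrow> complex" where
  "fourier_coeff h x = (1 / (2 * pi)) * integral {0..2*pi} (\<lambda>\<xi>. h \<xi> * exp (- \<i> * of_int x * \<xi>))"

text \<open>T_n[a] for an N x N matrix symbol a; entries indexed by k, l in {1..N*n}:
  the (i,j)-th block (i = (k-1) div N + 1, j = (l-1) div N + 1) is a_{i-j}, and inside it
  the entry ((k-1) mod N, (l-1) mod N).\<close>

definition block_toeplitz :: "nat \<Rightarrow> nat \<Rightarrow> (real \<Rightarrow> nat \<Rightarrow> nat \<Rightarrow> complex) \<Rightarrow> nat \<Rightarrow> nat \<Rightarrow> complex" where
  "block_toeplitz N n a k l =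
     fourier_coeff (\<lambda>\<xi>. a \<xi> ((k - 1) mod N) ((l - 1) mod N))
                   (int ((k - 1) div N) - int ((l - 1) div N))"

type_synonym hvec = "(int \<Rightarrow> complex) \<times> (int \<Rightarrow> complex)"

definition supp_h :: "hvec \<Rightarrow> int set" where
  "supp_h f = {x. fst f x \<noteq> 0 \<or> snd f x \<noteq> 0}"

definition fin_supp :: "hvec \<Rightarrow> bool" where
  "fin_supp f \<longleftrightarrow> finite (supp_h f)"

definition inner_h :: "hvec \<Rightarrow> hvec \<Rightarrow> complex" where
  "inner_h f g = (\<Sum>x\<in>supp_h f. cnj (fst f x) * fst g x + cnj (snd f x) * snd g x)"

definition ft :: "(int \<Rightarrow> complex) \<Rightarrow> real \<Rightarrow> complex" where
  "ft h \<xi> = (\<Sum>x\<in>{x. h x \<noteq> 0}. h x * exp (\<i> * of_int x * \<xi>))"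

definition S_op :: "(real \<Rightarrow> nat \<Rightarrow> nat \<Rightarrow> complex) \<Rightarrow> hvec \<Rightarrow> hvec" where
  "S_op s g =
     ((\<lambda>x. fourier_coeff (\<lambda>\<xi>. s \<xi> 0 0 * ft (fst g) \<xi> + s \<xi> 0 1 * ft (snd g) \<xi>) x),
      (\<lambda>x. fourier_coeff (\<lambda>\<xi>. s \<xi> 1 0 * ft (fst g) \<xi> + s \<xi> 1 1 * ft (snd g) \<xi>) x))"

text \<open>The algebra is a ring 'a with a central embedding sc of the complex scalars, an
  involution st (the adjoint), generators b x, and a state om.  B(f) is defined for
  finitely supported f.\<close>

definition Bop :: "(complex \<Rightarrow> 'a::ring_1) \<Rightarrow> ('a \<Rightarrow> 'a) \<Rightarrow> (int \<Rightarrow> 'a) \<Rightarrow> hvec \<Rightarrow> 'a" where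
  "Bop sc st b f = (\<Sum>x\<in>supp_h f. sc (fst f x) * st (b x) + sc (snd f x) * b x)"

definition Bprod :: "(complex \<Rightarrow> 'a::ring_1) \<Rightarrow> ('a \<Rightarrow> 'a) \<Rightarrow> (int \<Rightarrow> 'a) \<Rightarrow> hvec list \<Rightarrow> 'a" where
  "Bprod sc st b fs = foldr (\<lambda>f p. Bop sc st b f * p) fs 1"

definition star_algebra :: "(complex \<Rightarrow> 'a::ring_1) \<Rightarrow> ('a \<Rightarrow> 'a) \<Rightarrow> bool" where
  "star_algebra sc st \<longleftrightarrow>
     (\<forall>c d. sc (c + d) = sc c + sc d) \<and> (\<forall>c d. sc (c * d) = sc c * sc d) \<and> sc 1 = 1 \<and>
     (\<forall>c a. sc c * a = a * sc c) \<and>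
     (\<forall>a a'. st (a + a') = st a + st a') \<and> (\<forall>a a'. st (a * a') = st a' * st a) \<and>
     (\<forall>a. st (st a) = a) \<and> (\<forall>c. st (sc c) = sc (cnj c))"

definition CAR_generators :: "(complex \<Rightarrow> 'a::ring_1) \<Rightarrow> ('a \<Rightarrow> 'a) \<Rightarrow> (int \<Rightarrow> 'a) \<Rightarrow> bool" where
  "CAR_generators sc st b \<longleftrightarrow>
     (\<forall>x y. b x * b y + b y * b x = 0) \<and>
     (\<forall>x y. st (b x) * b y + b y * st (b x) = sc (if x = y then 1 else 0))"

definition is_state :: "(complex \<Rightarrow> 'a::ring_1) \<Rightarrow> ('a \<Rightarrow> 'a) \<Rightarrow> ('a \<Rightarrow> complex) \<Rightarrow> bool" where
  "is_state sc st om \<longleftrightarrow>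
     (\<forall>a a'. om (a + a') = om a + om a') \<and> (\<forall>c a. om (sc c * a) = c * om a) \<and>
     om 1 = 1 \<and> (\<forall>a. Im (om (st a * a)) = 0 \<and> Re (om (st a * a)) \<ge> 0)"

text \<open>Quasi-free with two-point operator S: omega(B*(f)B(g)) = (f, S g), and the moments
  of B's are given by the signed sum over pairings, written via its recursive expansion
  along the first factor (this also forces all odd moments to vanish).\<close>

definition quasi_free :: "(complex \<Rightarrow> 'a::ring_1) \<Rightarrow> ('a \<Rightarrow> 'a) \<Rightarrow> (int \<Rightarrow> 'a) \<Rightarrow> ('a \<Rightarrow> complex)
    \<Rightarrow> (real \<Rightarrow> nat \<Rightarrow> nat \<Rightarrow> complex) \<Rightarrow> bool" where
  "quasi_free sc st b om s \<longleftrightarrow>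
     (\<forall>f g. fin_supp f \<longrightarrow> fin_supp g \<longrightarrow>
        om (st (Bop sc st b f) * Bop sc st b g) = inner_h f (S_op s g)) \<and>
     (\<forall>f fs. fin_supp f \<longrightarrow> (\<forall>g\<in>set fs. fin_supp g) \<longrightarrow>
        om (Bprod sc st b (f # fs)) =
          (\<Sum>j<length fs. (-1)^j * om (Bop sc st b f * Bop sc st b (fs ! j))
                             * om (Bprod sc st b (take j fs @ drop (Suc j) fs))))"

definition w_vec :: "nat \<Rightarrow> hvec" where
  "w_vec k =
     ((\<lambda>j. (if int k = 2*j - 1 then 1 else 0) - \<i> * (if int k = 2*j then 1 else 0)),
      (\<lambda>j. (if int k = 2*j - 1 then 1 else 0) + \<i> * (if int k = 2*j then 1 else 0)))"

end

theory Submission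
  imports Defs
begin

text \<open>For \<open>k = 2p + r + 1\<close> with \<open>r \<in> {0, 1}\<close>, the Majorana vector \<open>w\<^sub>k\<close> sits on the single
  site \<open>p + 1\<close> with components \<open>(u\<^sub>r, cnj u\<^sub>r)\<close>, where \<open>u\<^sub>0 = 1\<close> and \<open>u\<^sub>1 = -\<i>\<close>. Hence \<open>B(w\<^sub>k)\<close>
  is self-adjoint, and for \<open>l = 2q + c + 1\<close> the correlation \<open>\<omega>(B(w\<^sub>k) B(w\<^sub>l)) = (w\<^sub>k, S w\<^sub>l)\<close> is the
  \<open>(p - q)\<close>-th Fourier coefficient of \<open>(cnj u\<^sub>r, u\<^sub>r) s(\<xi>) (u\<^sub>c, cnj u\<^sub>c)\<^sup>T\<close>, which equals
  \<open>\<delta>\<^sub>r\<^sub>c + \<i> a\<^sub>r\<^sub>c(\<xi>)\<close> pointwise.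

  Reality and skew-symmetry of \<open>T\<^sub>n[a]\<close> both come from the reflection \<open>\<xi> \<mapsto> 2\<pi> - \<xi>\<close>, which turns
  the \<open>m\<close>-th Fourier coefficient into the \<open>(-m)\<close>-th one: it maps \<open>s\<^sub>0\<close> to \<open>1 - s\<^sub>0\<close> and \<open>s\<^sub>2\<close> to
  \<open>-s\<^sub>2\<close> and fixes \<open>s\<^sub>3\<close>, hence it maps \<open>a(\<xi>)\<close> to \<open>cnj (a(\<xi>)) = -a(\<xi>)\<^sup>T\<close>.\<close>

definition fourier_integrable :: "(real \<Rightarrow> complex) \<Rightarrow> bool" where
  "fourier_integrable f \<longleftrightarrow>
     (\<forall>m::int. (\<lambda>\<xi>. f \<xi> * exp (- \<i> * of_int m * of_real \<xi>)) integrable_on {0..2*pi})"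

lemma fourier_integrable_add:
  "fourier_integrable f \<Longrightarrow> fourier_integrable g \<Longrightarrow> fourier_integrable (\<lambda>\<xi>. f \<xi> + g \<xi>)"
  unfolding fourier_integrable_def by (simp add: distrib_right integrable_add)

lemma fourier_integrable_diff:
  "fourier_integrable f \<Longrightarrow> fourier_integrable g \<Longrightarrow> fourier_integrable (\<lambda>\<xi>. f \<xi> - g \<xi>)"
  unfolding fourier_integrable_def by (simp add: left_diff_distrib integrable_diff)

lemma fourier_integrable_mult_left:
  "fourier_integrable f \<Longrightarrow> fourier_integrable (\<lambda>\<xi>. c * f \<xi>)"
  unfolding fourier_integrable_def by (simp add: mult.assoc integrable_on_mult_right)

lemma fourier_integrable_mult_right:
  "fourier_integrable f \<Longrightarrow> fourier_integrable (\<lambda>\<xi>. f \<xi> * c)"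
  using fourier_integrable_mult_left[of f c] by (simp add: mult.commute)

lemma fourier_integrable_const: "fourier_integrable (\<lambda>\<xi>. c)"
  unfolding fourier_integrable_def by (intro allI integrable_continuous_interval continuous_intros)

lemma fourier_integrable_If:
  "fourier_integrable f \<Longrightarrow> fourier_integrable g \<Longrightarrow> fourier_integrable (\<lambda>\<xi>. if P then f \<xi> else g \<xi>)"
  by (cases P) simp_all

lemma fourier_integrable_bounded_measurable:
  assumes f: "f \<in> borel_measurable borel" and bound: "\<And>\<xi>. norm (f \<xi>) \<le> B"
  shows "fourier_integrable f"
  unfolding fourier_integrable_def
proof
  fix m :: int
  let ?g = "\<lambda>\<xi>. f \<xi> * exp (- \<i> * of_int m * of_real \<xi>)"
  have "continuous_on UNIV (\<lambda>\<xi>::real. exp (- \<i> * of_int m * of_real \<xi>))"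
    by (intro continuous_intros)
  then have "?g \<in> borel_measurable borel"
    by (intro borel_measurable_times[OF f] borel_measurable_continuous_onI)
  then have "?g \<in> borel_measurable (lebesgue_on {0..2*pi})"
    using measurable_compose[OF id_borel_measurable_lebesgue_on] by simp
  moreover have "(\<lambda>_. B) integrable_on {0..2*pi}"
    by (rule integrable_const_ivl)
  moreover have "norm (?g \<xi>) \<le> B" for \<xi>
    using bound[of \<xi>] by (simp add: norm_mult norm_exp_eq_Re)
  ultimately show "?g integrable_on {0..2*pi}"
    by (rule measurable_bounded_by_integrable_imp_integrable) auto
qed

lemma fourier_integrable_of_real_bounded:
  fixes g :: "real \<Rightarrow> real"
  assumes "g \<in> borel_measurable borel" and "\<And>\<xi>. \<bar>g \<xi>\<bar> \<le> B"
  shows "fourier_integrable (\<lambda>\<xi>. of_real (g \<xi>))"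
  using assms by (intro fourier_integrable_bounded_measurable[where B = B]) auto

lemma fourier_coeff_add:
  "fourier_integrable f \<Longrightarrow> fourier_integrable g \<Longrightarrow>
     fourier_coeff (\<lambda>\<xi>. f \<xi> + g \<xi>) m = fourier_coeff f m + fourier_coeff g m"
  unfolding fourier_integrable_def fourier_coeff_def
  by (simp add: distrib_right integral_add distrib_left)

lemma fourier_coeff_mult_left: "fourier_coeff (\<lambda>\<xi>. c * f \<xi>) m = c * fourier_coeff f m"
  unfolding fourier_coeff_def by (simp add: mult.assoc)

lemma fourier_coeff_mult_exp:
  "fourier_coeff (\<lambda>\<xi>. f \<xi> * exp (\<i> * of_int q * of_real \<xi>)) m = fourier_coeff f (m - q)"
proof -
  have "exp (\<i> * of_int q * of_real \<xi>) * exp (- \<i> * of_int m * of_real \<xi>) =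
        exp (- \<i> * of_int (m - q) * of_real \<xi>)" for \<xi>
    by (simp add: exp_add[symmetric] algebra_simps)
  then show ?thesis unfolding fourier_coeff_def by (simp add: mult.assoc)
qed

lemma fourier_coeff_const: "fourier_coeff (\<lambda>\<xi>. c) m = (if m = 0 then c else 0)"
proof (cases "m = 0")
  case True
  then show ?thesis by (simp add: fourier_coeff_def scaleR_conv_of_real)
next
  case False
  define z where "z = - \<i> * of_int m"
  have "z \<noteq> 0" using False by (simp add: z_def)
  have "((\<lambda>w. exp (z * w) / z) has_field_derivative exp (z * of_real \<xi>)) (at (of_real \<xi>))"
    for \<xi> :: real
    using DERIV_cdivide[OF DERIV_chain2[OF DERIV_exp DERIV_cmult_Id[of z]], of z] \<open>z \<noteq> 0\<close> by simp
  then have antiderivative: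
      "((\<lambda>\<xi>. exp (z * of_real \<xi>) / z) has_vector_derivative exp (z * of_real \<xi>)) (at \<xi> within {0..2*pi})"
    for \<xi> :: real
    by (rule has_vector_derivative_at_within[OF has_vector_derivative_real_field])
  have integral: "((\<lambda>\<xi>. exp (z * of_real \<xi>)) has_integral
      exp (z * of_real (2*pi)) / z - exp (z * of_real 0) / z) {0..2*pi}"
    by (rule fundamental_theorem_of_calculus) (auto intro: antiderivative)
  have period: "z * of_real (2*pi) = (2 * of_int (- m) * of_real pi) * \<i>"
    by (simp add: z_def)
  have "exp (z * of_real (2*pi)) = 1"
    unfolding period using exp_integer_2pi[of "of_int (- m)"] by simp
  then have "integral {0..2*pi} (\<lambda>\<xi>. exp (z * of_real \<xi>)) = 0"
    using integral_unique[OF integral] by simp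
  then show ?thesis
    using False by (simp add: fourier_coeff_def z_def)
qed

lemma integral_reflect_Icc:
  fixes f :: "real \<Rightarrow> 'a::banach"
  shows "integral {a..b} (\<lambda>x. f (a + b - x)) = integral {a..b} f"
proof -
  have "integral {a..b} ((\<lambda>x. f (- x)) \<circ> (+) (- (a + b))) =
      integral {a + - (a + b)..b + - (a + b)} (\<lambda>x. f (- x))"
    by (rule integral_shift_Icc_real)
  also have "\<dots> = integral {- b..- a} (\<lambda>x. f (- x))"
    by (simp add: algebra_simps)
  finally show ?thesis
    by (simp add: o_def algebra_simps)
qed

lemma fourier_coeff_reflect: "fourier_coeff f (- m) = fourier_coeff (\<lambda>\<xi>. f (2*pi - \<xi>)) m"
proof -
  have "exp (- \<i> * of_int (- m) * of_real (2*pi - \<xi>)) = exp (- \<i> * of_int m * of_real \<xi>)" for \<xi>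
  proof -
    have "exp (- \<i> * of_int (- m) * of_real (2*pi - \<xi>))
        = exp ((2 * of_int m * of_real pi) * \<i>) * exp (- \<i> * of_int m * of_real \<xi>)"
      unfolding exp_add[symmetric] by (rule arg_cong[of _ _ exp]) (simp add: algebra_simps)
    then show ?thesis
      using exp_integer_2pi[of "of_int m"] by simp
  qed
  then show ?thesis
    unfolding fourier_coeff_def
    using integral_reflect_Icc[where f = "\<lambda>\<xi>. f \<xi> * exp (- \<i> * of_int (- m) * of_real \<xi>)"
        and a = 0 and b = "2*pi"]
    by simp
qed

lemma cnj_fourier_coeff: "cnj (fourier_coeff f m) = fourier_coeff (\<lambda>\<xi>. cnj (f \<xi>)) (- m)"
  unfolding fourier_coeff_def by (simp add: integral_cnj exp_cnj)

lemma block_index_decomp: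
  fixes N k :: nat
  assumes "0 < N" and "1 \<le> k"
  obtains p r where "k = N * p + r + 1" and "r < N"
proof
  show "k = N * ((k - 1) div N) + (k - 1) mod N + 1"
    using assms(2) by simp
  show "(k - 1) mod N < N"
    using assms(1) by simp
qed

lemma block_toeplitz_block:
  assumes "r < N" "c < N"
  shows "block_toeplitz N n a (N * p + r + 1) (N * q + c + 1) =
    fourier_coeff (\<lambda>\<xi>. a \<xi> r c) (int p - int q)"
  using assms by (simp add: block_toeplitz_def)

lemma block_toeplitz_real:
  assumes "\<And>\<xi> r c. a (2*pi - \<xi>) r c = cnj (a \<xi> r c)"
  shows "block_toeplitz N n a k l \<in> \<real>"
proof -
  have real_coeff: "cnj (fourier_coeff f m) = fourier_coeff f m"
    if "\<And>\<xi>. f (2*pi - \<xi>) = cnj (f \<xi>)" for f m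
    unfolding cnj_fourier_coeff fourier_coeff_reflect that by simp
  show ?thesis
    unfolding block_toeplitz_def Reals_cnj_iff by (rule real_coeff, rule assms)
qed

lemma block_toeplitz_skew:
  assumes "\<And>\<xi> r c. a (2*pi - \<xi>) c r = - a \<xi> r c"
  shows "block_toeplitz N n a l k = - block_toeplitz N n a k l"
proof -
  have "fourier_coeff g (- m) = - fourier_coeff f m"
    if "\<And>\<xi>. g (2*pi - \<xi>) = - f \<xi>" for f g m
    using fourier_coeff_mult_left[of "-1" f m] unfolding fourier_coeff_reflect that by simp
  moreover have "int ((l - 1) div N) - int ((k - 1) div N) =
      - (int ((k - 1) div N) - int ((l - 1) div N))"
    by simp
  ultimately show ?thesis
    unfolding block_toeplitz_def using assms by metis
qed

lemma abs_divide_le_1: "\<bar>x\<bar> \<le> (m::real) \<Longrightarrow> \<bar>x / m\<bar> \<le> 1"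
  by (cases "m = 0") (auto simp: abs_divide divide_le_eq_1)

lemma abs_phi_le_1: "\<bar>phi al al' m\<bar> \<le> 1"
proof -
  have "\<bar>sinh (al * m)\<bar> \<le> cosh (al * m)"
    using sinh_le_cosh_real[of "al * m"] sinh_le_cosh_real[of "- al * m"] by (simp add: abs_le_iff)
  moreover have "0 < cosh (al' * m)"
    by (rule cosh_real_pos)
  ultimately have "\<bar>sinh (al * m)\<bar> \<le> cosh (al * m) + cosh (al' * m)"
    by linarith
  then show ?thesis
    unfolding phi_def by (rule abs_divide_le_1)
qed

lemma abs_sin_le_mu: "\<bar>gam * sin \<xi>\<bar> \<le> mu gam lam \<xi>"
  unfolding mu_def power_mult_distrib[symmetric]
  using real_sqrt_sum_squares_ge2[of "cos \<xi> - lam" "\<bar>gam * sin \<xi>\<bar>"] by simp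

lemma abs_cos_le_mu: "\<bar>cos \<xi> - lam\<bar> \<le> mu gam lam \<xi>"
  unfolding mu_def power_mult_distrib[symmetric]
  using real_sqrt_sum_squares_ge1[of "\<bar>cos \<xi> - lam\<bar>" "gam * sin \<xi>"] by simp

lemma abs_s0_le_1: "\<bar>s0 bL bR gam lam \<xi>\<bar> \<le> 1"
  using abs_phi_le_1[of "delta_diff bL bR" "beta_avg bL bR" "mu gam lam \<xi>"]
  by (auto simp: s0_def sgn_real_def abs_le_iff)

lemma abs_s2_le_1: "\<bar>s2 bL bR gam lam \<xi>\<bar> \<le> 1"
proof -
  have "s2 bL bR gam lam \<xi> =
      1/2 * (phi (beta_avg bL bR) (delta_diff bL bR) (mu gam lam \<xi>) *
        (gam * sin \<xi> / mu gam lam \<xi>))"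
    by (simp add: s2_def)
  moreover have "\<bar>phi (beta_avg bL bR) (delta_diff bL bR) (mu gam lam \<xi>)\<bar> *
      \<bar>gam * sin \<xi> / mu gam lam \<xi>\<bar> \<le> 1"
    by (rule mult_le_one[OF abs_phi_le_1 abs_ge_zero abs_divide_le_1[OF abs_sin_le_mu]])
  ultimately show ?thesis
    by (simp add: abs_mult)
qed

lemma abs_s3_le_1: "\<bar>s3 bL bR gam lam \<xi>\<bar> \<le> 1"
proof -
  have "s3 bL bR gam lam \<xi> =
      - 1/2 * (phi (beta_avg bL bR) (delta_diff bL bR) (mu gam lam \<xi>) *
        ((cos \<xi> - lam) / mu gam lam \<xi>))"
    by (simp add: s3_def)
  moreover have "\<bar>phi (beta_avg bL bR) (delta_diff bL bR) (mu gam lam \<xi>)\<bar> *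
      \<bar>(cos \<xi> - lam) / mu gam lam \<xi>\<bar> \<le> 1"
    by (rule mult_le_one[OF abs_phi_le_1 abs_ge_zero abs_divide_le_1[OF abs_cos_le_mu]])
  ultimately show ?thesis
    by (simp add: abs_mult)
qed

lemma continuous_phi_mu: "continuous_on UNIV (\<lambda>\<xi>. phi al al' (mu gam lam \<xi>))"
  unfolding phi_def mu_def
  by (intro continuous_intros) (metis add_pos_pos cosh_real_pos less_irrefl)

lemma continuous_mu: "continuous_on UNIV (mu gam lam)"
  unfolding mu_def[abs_def] by (intro continuous_intros)

lemmas symbol_measurable_intros =
  measurable_compose[OF borel_measurable_continuous_onI borel_measurable_sgn]
  borel_measurable_divide borel_measurable_times borel_measurable_diff borel_measurable_const
  borel_measurable_continuous_onI continuous_phi_mu continuous_mu continuous_intros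

lemma s0_measurable: "s0 bL bR gam lam \<in> borel_measurable borel"
  unfolding s0_def[abs_def] kappa_def[abs_def] by (intro symbol_measurable_intros)

lemma s2_measurable: "s2 bL bR gam lam \<in> borel_measurable borel"
  unfolding s2_def[abs_def] by (intro symbol_measurable_intros)

lemma s3_measurable: "s3 bL bR gam lam \<in> borel_measurable borel"
  unfolding s3_def[abs_def] by (intro symbol_measurable_intros)

lemmas fourier_integrable_symbol_intros =
  fourier_integrable_If fourier_integrable_add fourier_integrable_diff fourier_integrable_mult_left
  fourier_integrable_const
  fourier_integrable_of_real_bounded[OF s0_measurable abs_s0_le_1]
  fourier_integrable_of_real_bounded[OF s2_measurable abs_s2_le_1]
  fourier_integrable_of_real_bounded[OF s3_measurable abs_s3_le_1]

lemma fourier_integrable_s_mat: "fourier_integrable (\<lambda>\<xi>. s_mat bL bR gam lam \<xi> r c)"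
  unfolding s_mat_def Let_def s1_def by (intro fourier_integrable_symbol_intros)

lemma fourier_integrable_a_sym: "fourier_integrable (\<lambda>\<xi>. a_sym bL bR gam lam \<xi> r c)"
  unfolding a_sym_def Let_def by (intro fourier_integrable_symbol_intros)

lemma mu_reflect: "mu gam lam (2*pi - \<xi>) = mu gam lam \<xi>"
  by (simp add: mu_def)

lemma kappa_reflect: "kappa gam lam (2*pi - \<xi>) = - kappa gam lam \<xi>"
proof -
  have "2 * (2*pi - \<xi>) = (2*pi - 2 * \<xi>) + 2*pi"
    by simp
  then have "sin (2 * (2*pi - \<xi>)) = - sin (2 * \<xi>)"
    by (simp only: sin_periodic sin_2pi_minus)
  then show ?thesis
    by (simp add: kappa_def)
qed

lemma s0_reflect: "s0 bL bR gam lam (2*pi - \<xi>) = 1 - s0 bL bR gam lam \<xi>"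
  by (simp add: s0_def mu_reflect kappa_reflect sgn_minus)

lemma s2_reflect: "s2 bL bR gam lam (2*pi - \<xi>) = - s2 bL bR gam lam \<xi>"
  by (simp add: s2_def mu_reflect)

lemma s3_reflect: "s3 bL bR gam lam (2*pi - \<xi>) = s3 bL bR gam lam \<xi>"
  by (simp add: s3_def mu_reflect)

lemma a_sym_reflect: "a_sym bL bR gam lam (2*pi - \<xi>) r c = cnj (a_sym bL bR gam lam \<xi> r c)"
  by (simp add: a_sym_def Let_def s0_reflect s2_reflect s3_reflect complex_eq_iff)

lemma a_sym_reflect_transpose: "a_sym bL bR gam lam (2*pi - \<xi>) c r = - a_sym bL bR gam lam \<xi> r c"
  by (simp add: a_sym_def Let_def s0_reflect s2_reflect s3_reflect complex_eq_iff)

definition site_vec :: "int \<Rightarrow> complex \<Rightarrow> complex \<Rightarrow> hvec" where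
  "site_vec x u v = ((\<lambda>y. if y = x then u else 0), (\<lambda>y. if y = x then v else 0))"

lemma supp_h_site_vec: "u \<noteq> 0 \<Longrightarrow> supp_h (site_vec x u v) = {x}"
  by (auto simp: supp_h_def site_vec_def)

lemma fin_supp_site_vec: "fin_supp (site_vec x u v)"
  unfolding fin_supp_def supp_h_def site_vec_def by (rule finite_subset[of _ "{x}"]) auto

lemma Bop_site_vec: "u \<noteq> 0 \<Longrightarrow> Bop sc st b (site_vec x u v) = sc u * st (b x) + sc v * b x"
  by (simp add: Bop_def supp_h_site_vec) (simp add: site_vec_def)

lemma inner_h_site_vec: "u \<noteq> 0 \<Longrightarrow> inner_h (site_vec x u v) g = cnj u * fst g x + cnj v * snd g x"
  by (simp add: inner_h_def supp_h_site_vec) (simp add: site_vec_def)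

lemma ft_single: "ft (\<lambda>y. if y = x then u else 0) \<xi> = u * exp (\<i> * of_int x * of_real \<xi>)"
proof (cases "u = 0")
  case False
  then have "{y. (if y = x then u else 0) \<noteq> 0} = {x}"
    by auto
  then show ?thesis
    by (simp add: ft_def)
qed (simp add: ft_def)

lemma S_op_site_vec:
  "S_op s (site_vec x u v) =
     ((\<lambda>y. fourier_coeff (\<lambda>\<xi>. s \<xi> 0 0 * u + s \<xi> 0 1 * v) (y - x)),
      (\<lambda>y. fourier_coeff (\<lambda>\<xi>. s \<xi> 1 0 * u + s \<xi> 1 1 * v) (y - x)))"
proof -
  have "s \<xi> i 0 * (u * e) + s \<xi> i 1 * (v * e) = (s \<xi> i 0 * u + s \<xi> i 1 * v) * e"
    for \<xi> i and e :: complex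
    by (simp add: algebra_simps)
  then show ?thesis
    unfolding S_op_def site_vec_def fst_conv snd_conv ft_single
    by (simp add: fourier_coeff_mult_exp fun_eq_iff)
qed

lemma Bop_site_vec_self_adjoint:
  assumes "star_algebra sc st" and "u \<noteq> 0"
  shows "st (Bop sc st b (site_vec x u (cnj u))) = Bop sc st b (site_vec x u (cnj u))"
  using assms by (simp add: Bop_site_vec star_algebra_def add.commute)

lemma quasi_free_site_correlation:
  assumes "star_algebra sc st" and "quasi_free sc st b om s" and "u \<noteq> 0" and "v \<noteq> 0"
  shows "om (Bop sc st b (site_vec x u (cnj u)) * Bop sc st b (site_vec y v (cnj v))) =
     cnj u * fourier_coeff (\<lambda>\<xi>. s \<xi> 0 0 * v + s \<xi> 0 1 * cnj v) (x - y) +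
     u * fourier_coeff (\<lambda>\<xi>. s \<xi> 1 0 * v + s \<xi> 1 1 * cnj v) (x - y)"
proof -
  have "om (Bop sc st b (site_vec x u (cnj u)) * Bop sc st b (site_vec y v (cnj v)))
      = om (st (Bop sc st b (site_vec x u (cnj u))) * Bop sc st b (site_vec y v (cnj v)))"
    using Bop_site_vec_self_adjoint[OF assms(1,3)] by simp
  also have "\<dots> = inner_h (site_vec x u (cnj u)) (S_op s (site_vec y v (cnj v)))"
    using assms(2) fin_supp_site_vec unfolding quasi_free_def by blast
  finally show ?thesis
    using assms(3) by (simp add: inner_h_site_vec S_op_site_vec)
qed

definition majorana_coeff :: "nat \<Rightarrow> complex" where
  "majorana_coeff c = (if c = 0 then 1 else - \<i>)"

lemma majorana_coeff_nonzero: "majorana_coeff c \<noteq> 0"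
  by (simp add: majorana_coeff_def)

lemma w_vec_eq_site_vec:
  "c < 2 \<Longrightarrow> w_vec (2 * q + c + 1) = site_vec (int q + 1) (majorana_coeff c) (cnj (majorana_coeff c))"
  by (auto simp: w_vec_def site_vec_def majorana_coeff_def fun_eq_iff)

lemma s_mat_majorana_sandwich:
  assumes "r < 2" and "c < 2"
  shows "cnj (majorana_coeff r) * (s_mat bL bR gam lam \<xi> 0 0 * majorana_coeff c
                                   + s_mat bL bR gam lam \<xi> 0 1 * cnj (majorana_coeff c))
         + majorana_coeff r * (s_mat bL bR gam lam \<xi> 1 0 * majorana_coeff c
                                + s_mat bL bR gam lam \<xi> 1 1 * cnj (majorana_coeff c))
       = (if r = c then 1 else 0) + \<i> * a_sym bL bR gam lam \<xi> r c"
  using less_2_cases[OF assms(1)] less_2_cases[OF assms(2)]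
  by (auto simp: s_mat_def a_sym_def Let_def s1_def majorana_coeff_def complex_eq_iff)

lemma majorana_correlation:
  assumes "star_algebra sc st" and "quasi_free sc st b om (s_mat bL bR gam lam)"
    and "r < 2" and "c < 2"
  shows "om (Bop sc st b (w_vec (2 * p + r + 1)) * Bop sc st b (w_vec (2 * q + c + 1))) =
     (if r = c \<and> p = q then 1 else 0) +
       \<i> * fourier_coeff (\<lambda>\<xi>. a_sym bL bR gam lam \<xi> r c) (int p - int q)"
proof -
  define u v m where "u = majorana_coeff r" and "v = majorana_coeff c" and "m = int p - int q"
  let ?s = "s_mat bL bR gam lam" and ?\<delta> = "if r = c then 1 else 0 :: complex"
  have "om (Bop sc st b (w_vec (2 * p + r + 1)) * Bop sc st b (w_vec (2 * q + c + 1))) =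
      cnj u * fourier_coeff (\<lambda>\<xi>. ?s \<xi> 0 0 * v + ?s \<xi> 0 1 * cnj v) m +
      u * fourier_coeff (\<lambda>\<xi>. ?s \<xi> 1 0 * v + ?s \<xi> 1 1 * cnj v) m"
    unfolding w_vec_eq_site_vec[OF assms(3)] w_vec_eq_site_vec[OF assms(4)] u_def v_def m_def
    using quasi_free_site_correlation[OF assms(1,2) majorana_coeff_nonzero majorana_coeff_nonzero,
        where x = "int p + 1" and y = "int q + 1"]
    by simp
  also have "\<dots> = fourier_coeff (\<lambda>\<xi>. cnj u * (?s \<xi> 0 0 * v + ?s \<xi> 0 1 * cnj v) +
                                   u * (?s \<xi> 1 0 * v + ?s \<xi> 1 1 * cnj v)) m"
    by (simp add: fourier_coeff_add fourier_coeff_mult_left fourier_integrable_add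
        fourier_integrable_mult_left fourier_integrable_mult_right fourier_integrable_s_mat)
  also have "\<dots> = fourier_coeff (\<lambda>\<xi>. ?\<delta> + \<i> * a_sym bL bR gam lam \<xi> r c) m"
    unfolding u_def v_def s_mat_majorana_sandwich[OF assms(3,4)] ..
  also have "\<dots> = (if m = 0 then ?\<delta> else 0) +
      \<i> * fourier_coeff (\<lambda>\<xi>. a_sym bL bR gam lam \<xi> r c) m"
    by (simp add: fourier_coeff_add fourier_coeff_const fourier_coeff_mult_left
        fourier_integrable_const fourier_integrable_mult_left fourier_integrable_a_sym)
  finally show ?thesis
    by (simp add: m_def)
qed

theorem lemma1:
  fixes sc :: "complex \<Rightarrow> 'a::ring_1" and st :: "'a \<Rightarrow> 'a" and b :: "int \<Rightarrow> 'a"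
    and om :: "'a \<Rightarrow> complex"
    and bL bR gam lam :: real and n :: nat
  assumes "bL > 0" and "bR > 0" and "-1 < gam" and "gam < 1"
    and "star_algebra sc st" and "CAR_generators sc st b" and "is_state sc st om"
    and "quasi_free sc st b om (s_mat bL bR gam lam)"
  shows "(\<forall>k l. 1 \<le> k \<and> k \<le> 2*n \<and> 1 \<le> l \<and> l \<le> 2*n \<longrightarrow>
            om (Bop sc st b (w_vec k) * Bop sc st b (w_vec l)) =
              (if k = l then 1 else 0) + \<i> * block_toeplitz 2 n (a_sym bL bR gam lam) k l)
       \<and> (\<forall>k l. 1 \<le> k \<and> k \<le> 2*n \<and> 1 \<le> l \<and> l \<le> 2*n \<longrightarrow>
            block_toeplitz 2 n (a_sym bL bR gam lam) k l \<in> \<real> \<and>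
            block_toeplitz 2 n (a_sym bL bR gam lam) l k = - block_toeplitz 2 n (a_sym bL bR gam lam) k l)"
proof (intro conjI allI impI)
  fix k l :: nat
  assume "1 \<le> k \<and> k \<le> 2*n \<and> 1 \<le> l \<and> l \<le> 2*n"
  then have "1 \<le> k" and "1 \<le> l"
    by auto
  obtain p r where k: "k = 2 * p + r + 1" "r < 2"
    by (rule block_index_decomp[of 2 k]) (use \<open>1 \<le> k\<close> in auto)
  obtain q c where l: "l = 2 * q + c + 1" "c < 2"
    by (rule block_index_decomp[of 2 l]) (use \<open>1 \<le> l\<close> in auto)
  have "k = l \<longleftrightarrow> r = c \<and> p = q"
    using k l by presburger
  then show "om (Bop sc st b (w_vec k) * Bop sc st b (w_vec l)) =
      (if k = l then 1 else 0) + \<i> * block_toeplitz 2 n (a_sym bL bR gam lam) k l"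
    using majorana_correlation[OF assms(5,8) k(2) l(2)] block_toeplitz_block[OF k(2) l(2)]
    by (simp add: k l)
next
  fix k l :: nat
  show "block_toeplitz 2 n (a_sym bL bR gam lam) k l \<in> \<real>"
    by (rule block_toeplitz_real) (rule a_sym_reflect)
  show "block_toeplitz 2 n (a_sym bL bR gam lam) l k = - block_toeplitz 2 n (a_sym bL bR gam lam) k l"
    by (rule block_toeplitz_skew) (rule a_sym_reflect_transpose)
qed

end
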